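(* Let $0<p\le\infty$, $E=\mathcal{L}^p(I)$, and suppose $\alpha_n(t)\in\{\Lambda,-\Lambda\}$ for all $n=1,\dots,N$ and all $t\in I$. Then the operator $\mathcal{P}_0^1:E\to E$, $\mathcal{P}_0^1(b):=0*_Tb$, has closed range.
   Context: Let $N\ge 2$, $I=[x_0,x_N]$, $\Delta: x_0<\dots<x_N$ a partition, $L_n(x)=a_nx+b_n$ affine with $L_n(x_0)=x_{n-1}$, $L_n(x_N)=x_n$, $I_1=[x_0,x_1]$, $I_n=(x_{n-1},x_n]$ for $n\ge2$, and $\alpha=(\alpha_1,\dots,\alpha_N)\in(\mathcal{L}^\infty(I))^N$ with $\Lambda:=\operatorname{ess\,sup}\{|\alpha_n(x)|:x\in I,n=1,\dots,N\}<1$. For $f,b\in E$, $f*_Tb$ is the unique fixed point in $E$ of the contraction $Tg(x):=f(x)+\alpha_n(L_n^{-1}(x))(g-b)(L_n^{-1}(x))$, $x\in I_n$; $0$ is the null function. *)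

theory Defs
  imports "HOL-Analysis.Analysis"
begin

definition Ival :: "(nat \<Rightarrow> real) \<Rightarrow> nat \<Rightarrow> real set" where
  "Ival x N = {x 0 .. x N}"

definition Isub :: "(nat \<Rightarrow> real) \<Rightarrow> nat \<Rightarrow> real set" where
  "Isub x n = (if n = 1 then {x 0 .. x 1} else {x (n - 1) <.. x n})"

text \<open>L_n(t) = a_n t + b_n with L_n(x_0) = x_{n-1}, L_n(x_N) = x_n.\<close>
definition La :: "(nat \<Rightarrow> real) \<Rightarrow> nat \<Rightarrow> nat \<Rightarrow> real" where
  "La x N n = (x n - x (n - 1)) / (x N - x 0)"

definition Lb :: "(nat \<Rightarrow> real) \<Rightarrow> nat \<Rightarrow> nat \<Rightarrow> real" where
  "Lb x N n = x (n - 1) - La x N n * x 0"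

definition Lmap :: "(nat \<Rightarrow> real) \<Rightarrow> nat \<Rightarrow> nat \<Rightarrow> real \<Rightarrow> real" where
  "Lmap x N n t = La x N n * t + Lb x N n"

definition Linv :: "(nat \<Rightarrow> real) \<Rightarrow> nat \<Rightarrow> nat \<Rightarrow> real \<Rightarrow> real" where
  "Linv x N n y = (y - Lb x N n) / La x N n"

text \<open>The space L^p(S) (0 < p \<le> \<infinity>), as a set of representatives; elements that agree
  a.e. represent the same element of L^p.\<close>
definition Lp_space :: "ennreal \<Rightarrow> real set \<Rightarrow> (real \<Rightarrow> real) set" where
  "Lp_space p S = {f. f \<in> borel_measurable (lebesgue_on S) \<and>
     (if p = \<infinity> then (\<exists>C. AE t in lebesgue_on S. \<bar>f t\<bar> \<le> C)
      else (\<integral>\<^sup>+ t. ennreal (\<bar>f t\<bar> powr enn2real p) \<partial>lebesgue_on S) < \<infinity>)}"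

text \<open>Convergence in L^p(S): for p < \<infinity>, \<integral>|F_k - g|^p \<rightarrow> 0 (this is the standard
  (quasi-)metric for 0 < p < 1 and the p-th power of the norm for p \<ge> 1);
  for p = \<infinity>, ess sup |F_k - g| \<rightarrow> 0.\<close>
definition Lp_conv :: "ennreal \<Rightarrow> real set \<Rightarrow> (nat \<Rightarrow> real \<Rightarrow> real) \<Rightarrow> (real \<Rightarrow> real) \<Rightarrow> bool" where
  "Lp_conv p S F g =
     (if p = \<infinity> then
        (\<forall>e>0. eventually (\<lambda>k. AE t in lebesgue_on S. \<bar>F k t - g t\<bar> \<le> e) sequentially)
      else
        ((\<lambda>k. \<integral>\<^sup>+ t. ennreal (\<bar>F k t - g t\<bar> powr enn2real p) \<partial>lebesgue_on S) \<longlongrightarrow> 0) sequentially)"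

text \<open>g represents f *_T b in E = L^p(I): g \<in> E and g = T g a.e. on I, where
  T g(t) = f(t) + \<alpha>_n(L_n^{-1} t) (g - b)(L_n^{-1} t) for t \<in> I_n.\<close>
definition is_fractal :: "ennreal \<Rightarrow> (nat \<Rightarrow> real) \<Rightarrow> nat \<Rightarrow> (nat \<Rightarrow> real \<Rightarrow> real)
    \<Rightarrow> (real \<Rightarrow> real) \<Rightarrow> (real \<Rightarrow> real) \<Rightarrow> (real \<Rightarrow> real) \<Rightarrow> bool" where
  "is_fractal p x N \<alpha> f b g \<longleftrightarrow>
     g \<in> Lp_space p (Ival x N) \<and>
     (\<forall>n\<in>{1..N}. AE t in lebesgue_on (Ival x N).
        t \<in> Isub x n \<longrightarrow>
        g t = f t + \<alpha> n (Linv x N n t) * (g (Linv x N n t) - b (Linv x N n t)))"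

end

theory Submission
  imports Defs
begin

text \<open>Pulling the fixed point equation back along the affine maps \<open>L\<^sub>n\<close> turns it into
  \<open>g \<circ> L\<^sub>n = f \<circ> L\<^sub>n + \<alpha>\<^sub>n (g - b)\<close> a.e. on \<open>I\<close>. For \<open>f = 0\<close> and \<open>|\<alpha>\<^sub>n| = |\<alpha>\<^sub>1|\<close> this
  eliminates \<open>b\<close>: every \<open>g\<close> in the range satisfies \<open>g \<circ> L\<^sub>n = (\<alpha>\<^sub>n / \<alpha>\<^sub>1) (g \<circ> L\<^sub>1)\<close>, and
  conversely every \<open>g \<in> E\<close> satisfying these relations equals \<open>0 *\<^sub>T b\<close> for
  \<open>b = g - (g \<circ> L\<^sub>1) / \<alpha>\<^sub>1\<close>. Composition with an affine self-map of \<open>I\<close> and multiplication by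
  a bounded function are continuous for \<open>L\<^sup>p\<close> convergence (also for \<open>p < 1\<close> and \<open>p = \<infinity>\<close>),
  so the relations pass to limits and the range is closed.\<close>

lemma measurable_lebesgue_real_affine:
  fixes c d :: real
  shows "c \<noteq> 0 \<Longrightarrow> (\<lambda>s. d + c * s) \<in> lebesgue \<rightarrow>\<^sub>M lebesgue"
  using lebesgue_affine_measurable[where c="\<lambda>_::real. c" and t=d] by simp

lemma AE_lebesgue_affine_pullback:
  fixes c d :: real
  assumes c: "c \<noteq> 0" and P: "AE t in lebesgue. P t"
  shows "AE s in lebesgue. P (d + c * s)"
proof -
  obtain Z where Z: "Z \<in> null_sets lebesgue" "{t. \<not> P t} \<subseteq> Z"
    using P by (auto simp: eventually_ae_filter)
  have "AE t in lebesgue. t \<notin> Z"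
    using Z(1) by (rule AE_not_in)
  then have "AE t in distr lebesgue lebesgue (\<lambda>s. d + c * s). t \<notin> Z"
    by (subst (asm) lebesgue_real_affine[OF c, of d]) (simp add: AE_density c)
  moreover note measurable_lebesgue_real_affine[OF c, of d]
  moreover have "{t \<in> space lebesgue. t \<notin> Z} \<in> sets lebesgue"
    using sets.compl_sets[of Z lebesgue] Z(1) by (auto simp: set_diff_eq null_setsD2)
  ultimately have "AE s in lebesgue. d + c * s \<notin> Z"
    by (simp add: AE_distr_iff)
  then show ?thesis
    by eventually_elim (use Z(2) in auto)
qed

lemma AE_lebesgue_on_affine_pullback:
  fixes c d :: real
  assumes c: "c \<noteq> 0" and S: "S \<in> sets lebesgue" and P: "AE t in lebesgue_on S. P t"
  shows "AE s in lebesgue_on S. d + c * s \<in> S \<longrightarrow> P (d + c * s)"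
proof -
  have "AE t in lebesgue. t \<in> S \<longrightarrow> P t"
    using P S by (simp add: AE_restrict_space_iff)
  from AE_lebesgue_affine_pullback[OF c this, of d] show ?thesis
    using S by (simp add: AE_restrict_space_iff eventually_mono)
qed

lemma AE_lebesgue_on_affine_compose:
  fixes c d :: real
  assumes c: "c \<noteq> 0" and S: "S \<in> sets lebesgue" and maps: "(\<lambda>s. d + c * s) ` S \<subseteq> S"
    and P: "AE t in lebesgue_on S. P t"
  shows "AE s in lebesgue_on S. P (d + c * s)"
proof -
  have "AE s in lebesgue_on S. s \<in> S"
    using AE_space[of "lebesgue_on S"] by simp
  with AE_lebesgue_on_affine_pullback[OF c S P, of d] show ?thesis
    by eventually_elim (use maps in auto)
qed

lemma measurable_lebesgue_on_affine_compose:
  fixes c d :: real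
  assumes c: "c \<noteq> 0" and maps: "(\<lambda>s. d + c * s) ` S \<subseteq> S"
    and f: "f \<in> lebesgue_on S \<rightarrow>\<^sub>M M"
  shows "(\<lambda>s. f (d + c * s)) \<in> lebesgue_on S \<rightarrow>\<^sub>M M"
proof -
  have "(\<lambda>s. d + c * s) \<in> lebesgue_on S \<rightarrow>\<^sub>M lebesgue_on S"
    using maps by (intro measurable_restrict_space3 measurable_lebesgue_real_affine c) auto
  from measurable_compose[OF this f] show ?thesis .
qed

lemma nn_integral_lebesgue_on_affine_compose_le:
  fixes c d :: real and f :: "real \<Rightarrow> ennreal"
  assumes c: "c \<noteq> 0" and S: "S \<in> sets lebesgue" and maps: "(\<lambda>s. d + c * s) ` S \<subseteq> S"
    and f: "f \<in> borel_measurable (lebesgue_on S)"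
  shows "(\<integral>\<^sup>+ s. f (d + c * s) \<partial>lebesgue_on S) \<le> ennreal (1 / \<bar>c\<bar>) * (\<integral>\<^sup>+ t. f t \<partial>lebesgue_on S)"
proof -
  define F where "F t = f t * indicator S t" for t
  have F: "F \<in> borel_measurable lebesgue"
    using f S unfolding F_def by (subst (asm) borel_measurable_restrict_space_iff_ennreal) auto
  have "(\<integral>\<^sup>+ s. f (d + c * s) \<partial>lebesgue_on S) = (\<integral>\<^sup>+ s. f (d + c * s) * indicator S s \<partial>lebesgue)"
    using S by (simp add: nn_integral_restrict_space)
  also have "\<dots> \<le> (\<integral>\<^sup>+ s. F (d + c * s) \<partial>lebesgue)"
    using maps by (intro nn_integral_mono) (auto simp: F_def indicator_def)
  also have "\<dots> = ennreal (1 / \<bar>c\<bar>) * (ennreal \<bar>c\<bar> * (\<integral>\<^sup>+ s. F (d + c * s) \<partial>lebesgue))"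
    using c by (simp add: ennreal_mult[symmetric] mult.assoc[symmetric])
  also have "\<dots> = ennreal (1 / \<bar>c\<bar>) * (\<integral>\<^sup>+ t. f t \<partial>lebesgue_on S)"
    using nn_integral_real_affine_lebesgue[OF F c, of d] S
    by (simp add: F_def nn_integral_restrict_space)
  finally show ?thesis .
qed

lemma powr_add_le:
  fixes u v q :: real
  assumes "0 \<le> u" "0 \<le> v" "0 < q"
  shows "(u + v) powr q \<le> 2 powr q * (u powr q + v powr q)"
proof -
  have "(u + v) powr q \<le> (2 * max u v) powr q"
    using assms by (intro powr_mono2) auto
  also have "\<dots> = 2 powr q * max u v powr q"
    using assms by (simp add: powr_mult)
  also have "max u v powr q \<le> u powr q + v powr q"
    by (simp add: max_def)
  finally show ?thesis
    by (simp add: mult_left_mono)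
qed

lemma abs_diff_scaled_le:
  fixes a b c C :: real
  assumes "\<bar>c\<bar> \<le> C"
  shows "\<bar>a - c * b\<bar> \<le> \<bar>a\<bar> + C * \<bar>b\<bar>"
proof -
  have "\<bar>c * b\<bar> \<le> C * \<bar>b\<bar>"
    using assms by (simp add: abs_mult mult_right_mono)
  then show ?thesis
    using abs_triangle_ineq4[of a "c * b"] by linarith
qed

lemma nn_integral_powr_diff_scaled_le:
  fixes f h c :: "'a \<Rightarrow> real" and q C :: real
  assumes q: "0 < q" and C: "0 \<le> C" "\<And>s. s \<in> space M \<Longrightarrow> \<bar>c s\<bar> \<le> C"
    and f: "f \<in> borel_measurable M" and h: "h \<in> borel_measurable M"
  shows "(\<integral>\<^sup>+ s. ennreal (\<bar>f s - c s * h s\<bar> powr q) \<partial>M)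
    \<le> ennreal (2 powr q) * ((\<integral>\<^sup>+ s. ennreal (\<bar>f s\<bar> powr q) \<partial>M)
        + ennreal (C powr q) * (\<integral>\<^sup>+ s. ennreal (\<bar>h s\<bar> powr q) \<partial>M))"
proof -
  have "(\<integral>\<^sup>+ s. ennreal (\<bar>f s - c s * h s\<bar> powr q) \<partial>M)
      \<le> (\<integral>\<^sup>+ s. ennreal (2 powr q) * (ennreal (\<bar>f s\<bar> powr q) + ennreal (C powr q) * ennreal (\<bar>h s\<bar> powr q)) \<partial>M)"
  proof (intro nn_integral_mono)
    fix s assume s: "s \<in> space M"
    have "\<bar>f s - c s * h s\<bar> powr q \<le> (\<bar>f s\<bar> + C * \<bar>h s\<bar>) powr q"
      using q abs_diff_scaled_le[OF C(2)[OF s]] by (intro powr_mono2) auto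
    also have "\<dots> \<le> 2 powr q * (\<bar>f s\<bar> powr q + C powr q * \<bar>h s\<bar> powr q)"
      using powr_add_le[of "\<bar>f s\<bar>" "C * \<bar>h s\<bar>" q] q C(1) by (simp add: powr_mult)
    finally show "ennreal (\<bar>f s - c s * h s\<bar> powr q)
        \<le> ennreal (2 powr q) * (ennreal (\<bar>f s\<bar> powr q) + ennreal (C powr q) * ennreal (\<bar>h s\<bar> powr q))"
      by (simp add: ennreal_leI ennreal_mult[symmetric] ennreal_plus[symmetric] del: ennreal_plus)
  qed
  also have "\<dots> = ennreal (2 powr q) * ((\<integral>\<^sup>+ s. ennreal (\<bar>f s\<bar> powr q) \<partial>M)
        + ennreal (C powr q) * (\<integral>\<^sup>+ s. ennreal (\<bar>h s\<bar> powr q) \<partial>M))"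
    using f h by (simp add: nn_integral_cmult nn_integral_add)
  finally show ?thesis .
qed

lemma Lp_space_measurable: "f \<in> Lp_space p S \<Longrightarrow> f \<in> borel_measurable (lebesgue_on S)"
  by (simp add: Lp_space_def)

lemma Lp_space_diff_scaled:
  assumes p: "0 < p" and f: "f \<in> Lp_space p S" and h: "h \<in> Lp_space p S"
    and c: "c \<in> borel_measurable (lebesgue_on S)" and C: "0 \<le> C" "\<And>s. s \<in> S \<Longrightarrow> \<bar>c s\<bar> \<le> C"
  shows "(\<lambda>s. f s - c s * h s) \<in> Lp_space p S"
proof -
  have meas: "(\<lambda>s. f s - c s * h s) \<in> borel_measurable (lebesgue_on S)"
    using Lp_space_measurable[OF f] Lp_space_measurable[OF h] c by measurable
  show ?thesis
  proof (cases "p = \<infinity>")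
    case True
    then obtain A B where "AE s in lebesgue_on S. \<bar>f s\<bar> \<le> A" "AE s in lebesgue_on S. \<bar>h s\<bar> \<le> B"
      using f h by (auto simp: Lp_space_def)
    moreover have "AE s in lebesgue_on S. s \<in> S"
      using AE_space[of "lebesgue_on S"] by simp
    ultimately have "AE s in lebesgue_on S. \<bar>f s - c s * h s\<bar> \<le> A + C * B"
    proof eventually_elim
      case (elim s)
      have "C * \<bar>h s\<bar> \<le> C * B"
        using C(1) elim(2) by (simp add: mult_left_mono)
      then show ?case
        using elim(1) abs_diff_scaled_le[OF C(2)[OF elim(3)], of "f s" "h s"] by linarith
    qed
    then show ?thesis
      using True meas by (auto simp: Lp_space_def)
  next
    case False
    define q where "q = enn2real p"
    have q: "0 < q"
      using p False by (simp add: q_def enn2real_positive_iff top.not_eq_extremum)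
    have "(\<integral>\<^sup>+ s. ennreal (\<bar>f s - c s * h s\<bar> powr q) \<partial>lebesgue_on S) < \<infinity>"
      using nn_integral_powr_diff_scaled_le[OF q C(1), of "lebesgue_on S" c f h] f h C(2) False
      by (simp add: Lp_space_def q_def ennreal_mult_less_top le_less_trans)
    then show ?thesis
      using False meas by (simp add: Lp_space_def q_def)
  qed
qed

lemma Lp_conv_diff_scaled:
  assumes p: "0 < p" and C: "0 \<le> C" "\<And>s. s \<in> S \<Longrightarrow> \<bar>c s\<bar> \<le> C"
    and F: "\<And>k. F k \<in> borel_measurable (lebesgue_on S)" and f: "f \<in> borel_measurable (lebesgue_on S)"
    and H: "\<And>k. H k \<in> borel_measurable (lebesgue_on S)" and h: "h \<in> borel_measurable (lebesgue_on S)"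
    and FF: "Lp_conv p S F f" and HH: "Lp_conv p S H h"
  shows "Lp_conv p S (\<lambda>k s. F k s - c s * H k s) (\<lambda>s. f s - c s * h s)"
proof -
  have regroup: "F k s - c s * H k s - (f s - c s * h s) = F k s - f s - c s * (H k s - h s)" for k s
    by (simp add: algebra_simps)
  show ?thesis
  proof (cases "p = \<infinity>")
    case True
    have "\<forall>\<^sub>F k in sequentially. AE s in lebesgue_on S.
        \<bar>F k s - c s * H k s - (f s - c s * h s)\<bar> \<le> e" if e: "e > 0" for e
    proof -
      define e' where "e' = e / (1 + C)"
      have e': "e' > 0"
        using e C(1) by (simp add: e'_def)
      have "e' + C * e' = (1 + C) * e'"
        by (simp add: algebra_simps)
      also have "\<dots> = e"
        using C(1) by (simp add: e'_def)
      finally have e'_sum: "e' + C * e' = e" .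
      have "\<forall>\<^sub>F k in sequentially. AE s in lebesgue_on S. \<bar>F k s - f s\<bar> \<le> e'"
           "\<forall>\<^sub>F k in sequentially. AE s in lebesgue_on S. \<bar>H k s - h s\<bar> \<le> e'"
        using FF HH True e' by (simp_all add: Lp_conv_def)
      then show ?thesis
      proof eventually_elim
        case (elim k)
        moreover have "AE s in lebesgue_on S. s \<in> S"
          using AE_space[of "lebesgue_on S"] by simp
        ultimately show ?case
        proof eventually_elim
          case (elim s)
          have "C * \<bar>H k s - h s\<bar> \<le> C * e'"
            using C(1) elim(2) by (simp add: mult_left_mono)
          then show ?case
            unfolding regroup
            using elim(1) e'_sum abs_diff_scaled_le[OF C(2)[OF elim(3)], of "F k s - f s" "H k s - h s"]
            by linarith
        qed
      qed
    qed
    then show ?thesis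
      using True by (simp add: Lp_conv_def)
  next
    case False
    define q where "q = enn2real p"
    have q: "0 < q"
      using p False by (simp add: q_def enn2real_positive_iff top.not_eq_extremum)
    let ?I = "\<lambda>u. \<integral>\<^sup>+ s. ennreal (\<bar>u s\<bar> powr q) \<partial>lebesgue_on S"
    have lim: "(\<lambda>k. ?I (\<lambda>s. F k s - f s)) \<longlonglongrightarrow> 0" "(\<lambda>k. ?I (\<lambda>s. H k s - h s)) \<longlonglongrightarrow> 0"
      using FF HH False by (simp_all add: Lp_conv_def q_def)
    let ?U = "\<lambda>k. ennreal (2 powr q) * (?I (\<lambda>s. F k s - f s) + ennreal (C powr q) * ?I (\<lambda>s. H k s - h s))"
    have "?U \<longlonglongrightarrow> ennreal (2 powr q) * (0 + ennreal (C powr q) * 0)"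
      by (intro ennreal_tendsto_cmult tendsto_add lim) simp_all
    then have upper: "?U \<longlonglongrightarrow> 0"
      by simp
    have bound: "?I (\<lambda>s. F k s - c s * H k s - (f s - c s * h s)) \<le> ?U k" for k
    proof -
      have "(\<lambda>s. F k s - f s) \<in> borel_measurable (lebesgue_on S)"
           "(\<lambda>s. H k s - h s) \<in> borel_measurable (lebesgue_on S)"
        using F[of k] f H[of k] h by measurable
      from nn_integral_powr_diff_scaled_le[OF q C(1) _ this] C(2)
      have "?I (\<lambda>s. F k s - f s - c s * (H k s - h s)) \<le> ?U k"
        by simp
      then show ?thesis
        by (simp only: regroup)
    qed
    have "(\<lambda>k. ?I (\<lambda>s. F k s - c s * H k s - (f s - c s * h s))) \<longlonglongrightarrow> 0"
      by (rule tendsto_sandwich[OF _ _ tendsto_const upper]) (simp_all add: bound)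
    then show ?thesis
      using False by (simp add: Lp_conv_def q_def)
  qed
qed

lemma Lp_conv_AE_zero_limit:
  assumes f: "f \<in> borel_measurable (lebesgue_on S)"
    and zero: "\<And>k. AE s in lebesgue_on S. F k s = 0" and conv: "Lp_conv p S F f"
  shows "AE s in lebesgue_on S. f s = 0"
proof (cases "p = \<infinity>")
  case True
  have "AE s in lebesgue_on S. \<bar>f s\<bar> \<le> 1 / Suc m" for m
  proof -
    have "\<forall>\<^sub>F k in sequentially. AE s in lebesgue_on S. \<bar>F k s - f s\<bar> \<le> 1 / Suc m"
      using conv True by (simp add: Lp_conv_def)
    then obtain k where "AE s in lebesgue_on S. \<bar>F k s - f s\<bar> \<le> 1 / Suc m"
      by (auto simp: eventually_sequentially)
    with zero[of k] show ?thesis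
      by eventually_elim simp
  qed
  then have "AE s in lebesgue_on S. \<forall>m. \<bar>f s\<bar> \<le> 1 / Suc m"
    by (simp add: AE_all_countable)
  then show ?thesis
  proof eventually_elim
    case (elim s)
    show ?case
    proof (rule ccontr)
      assume "f s \<noteq> 0"
      then have "0 < \<bar>f s\<bar>"
        by simp
      then obtain m where "inverse (real (Suc m)) < \<bar>f s\<bar>"
        using reals_Archimedean by blast
      moreover have "\<bar>f s\<bar> \<le> inverse (real (Suc m))"
        using elim by (simp add: divide_inverse)
      ultimately show False
        by linarith
    qed
  qed
next
  case False
  define q where "q = enn2real p"
  have "(\<integral>\<^sup>+ s. ennreal (\<bar>F k s - f s\<bar> powr q) \<partial>lebesgue_on S) = (\<integral>\<^sup>+ s. ennreal (\<bar>f s\<bar> powr q) \<partial>lebesgue_on S)" for k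
    using zero[of k] by (intro nn_integral_cong_AE) (auto elim: eventually_mono)
  then have "(\<lambda>_. \<integral>\<^sup>+ s. ennreal (\<bar>f s\<bar> powr q) \<partial>lebesgue_on S) \<longlonglongrightarrow> 0"
    using conv False by (simp add: Lp_conv_def q_def)
  then have "(\<integral>\<^sup>+ s. ennreal (\<bar>f s\<bar> powr q) \<partial>lebesgue_on S) = 0"
    by (simp add: LIMSEQ_const_iff)
  then have "AE s in lebesgue_on S. ennreal (\<bar>f s\<bar> powr q) = 0"
    using f by (subst (asm) nn_integral_0_iff_AE) auto
  then show ?thesis
    by eventually_elim simp
qed

lemma Lp_space_affine_compose:
  fixes c d :: real
  assumes c: "c \<noteq> 0" and S: "S \<in> sets lebesgue" and maps: "(\<lambda>s. d + c * s) ` S \<subseteq> S"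
    and f: "f \<in> Lp_space p S"
  shows "(\<lambda>s. f (d + c * s)) \<in> Lp_space p S"
proof -
  have meas: "(\<lambda>s. f (d + c * s)) \<in> borel_measurable (lebesgue_on S)"
    using measurable_lebesgue_on_affine_compose[OF c maps Lp_space_measurable[OF f]] .
  show ?thesis
  proof (cases "p = \<infinity>")
    case True
    then obtain A where "AE t in lebesgue_on S. \<bar>f t\<bar> \<le> A"
      using f by (auto simp: Lp_space_def)
    from AE_lebesgue_on_affine_compose[OF c S maps this] show ?thesis
      using True meas by (auto simp: Lp_space_def)
  next
    case False
    let ?g = "\<lambda>t. ennreal (\<bar>f t\<bar> powr enn2real p)"
    have "?g \<in> borel_measurable (lebesgue_on S)"
      using Lp_space_measurable[OF f] by measurable
    then have "(\<integral>\<^sup>+ s. ?g (d + c * s) \<partial>lebesgue_on S) \<le> ennreal (1 / \<bar>c\<bar>) * (\<integral>\<^sup>+ t. ?g t \<partial>lebesgue_on S)"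
      by (rule nn_integral_lebesgue_on_affine_compose_le[OF c S maps])
    also have "\<dots> < \<infinity>"
      using f False by (simp add: Lp_space_def ennreal_mult_less_top)
    finally show ?thesis
      using False meas by (simp add: Lp_space_def)
  qed
qed

lemma Lp_conv_affine_compose:
  fixes c d :: real
  assumes c: "c \<noteq> 0" and S: "S \<in> sets lebesgue" and maps: "(\<lambda>s. d + c * s) ` S \<subseteq> S"
    and F: "\<And>k. F k \<in> borel_measurable (lebesgue_on S)" and f: "f \<in> borel_measurable (lebesgue_on S)"
    and conv: "Lp_conv p S F f"
  shows "Lp_conv p S (\<lambda>k s. F k (d + c * s)) (\<lambda>s. f (d + c * s))"
proof (cases "p = \<infinity>")
  case True
  have "\<forall>\<^sub>F k in sequentially. AE s in lebesgue_on S. \<bar>F k (d + c * s) - f (d + c * s)\<bar> \<le> e"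
    if "e > 0" for e
  proof -
    have "\<forall>\<^sub>F k in sequentially. AE t in lebesgue_on S. \<bar>F k t - f t\<bar> \<le> e"
      using conv True that by (simp add: Lp_conv_def)
    then show ?thesis
      by (rule eventually_mono) (rule AE_lebesgue_on_affine_compose[OF c S maps])
  qed
  then show ?thesis
    using True by (simp add: Lp_conv_def)
next
  case False
  let ?I = "\<lambda>k. \<integral>\<^sup>+ t. ennreal (\<bar>F k t - f t\<bar> powr enn2real p) \<partial>lebesgue_on S"
  have "(\<lambda>k. ennreal (1 / \<bar>c\<bar>) * ?I k) \<longlonglongrightarrow> ennreal (1 / \<bar>c\<bar>) * 0"
    using conv False by (intro ennreal_tendsto_cmult) (simp_all add: Lp_conv_def)
  then have upper: "(\<lambda>k. ennreal (1 / \<bar>c\<bar>) * ?I k) \<longlonglongrightarrow> 0"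
    by simp
  have bound: "(\<integral>\<^sup>+ s. ennreal (\<bar>F k (d + c * s) - f (d + c * s)\<bar> powr enn2real p) \<partial>lebesgue_on S)
      \<le> ennreal (1 / \<bar>c\<bar>) * ?I k" for k
  proof -
    have "(\<lambda>t. ennreal (\<bar>F k t - f t\<bar> powr enn2real p)) \<in> borel_measurable (lebesgue_on S)"
      using F[of k] f by measurable
    then show ?thesis
      by (rule nn_integral_lebesgue_on_affine_compose_le[OF c S maps])
  qed
  have "(\<lambda>k. \<integral>\<^sup>+ s. ennreal (\<bar>F k (d + c * s) - f (d + c * s)\<bar> powr enn2real p) \<partial>lebesgue_on S)
      \<longlonglongrightarrow> 0"
    by (rule tendsto_sandwich[OF _ _ tendsto_const upper]) (simp_all add: bound)
  then show ?thesis
    using False by (simp add: Lp_conv_def)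
qed

locale increasing_partition =
  fixes x :: "nat \<Rightarrow> real" and N :: nat
  assumes increasing: "\<And>i. i < N \<Longrightarrow> x i < x (Suc i)"
begin

lemma x_less: "i < j \<Longrightarrow> j \<le> N \<Longrightarrow> x i < x j"
proof (induction j)
  case (Suc j)
  then show ?case
    using increasing[of j] by (cases "i = j") auto
qed simp

lemma x_le: "i \<le> j \<Longrightarrow> j \<le> N \<Longrightarrow> x i \<le> x j"
  using x_less[of i j] by (cases "i = j") auto

lemma La_pos: "n \<in> {1..N} \<Longrightarrow> 0 < La x N n"
  using x_less[of "n - 1" n] x_less[of 0 N] by (simp add: La_def)

lemma Lmap_affine: "Lmap x N n = (\<lambda>s. Lb x N n + La x N n * s)"
  by (auto simp: Lmap_def)

lemma Linv_affine: "Linv x N n = (\<lambda>t. - Lb x N n / La x N n + 1 / La x N n * t)"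
  by (auto simp: Linv_def diff_divide_distrib)

lemma Linv_Lmap: "n \<in> {1..N} \<Longrightarrow> Linv x N n (Lmap x N n s) = s"
  using La_pos[of n] by (simp add: Linv_def Lmap_def)

lemma Lmap_Linv: "n \<in> {1..N} \<Longrightarrow> Lmap x N n (Linv x N n t) = t"
  using La_pos[of n] by (simp add: Linv_def Lmap_def)

lemma Lmap_from_x0: "Lmap x N n s = x (n - 1) + La x N n * (s - x 0)"
  by (simp add: Lmap_def Lb_def algebra_simps)

lemma La_length: "n \<in> {1..N} \<Longrightarrow> La x N n * (x N - x 0) = x n - x (n - 1)"
  using x_less[of 0 N] by (simp add: La_def)

lemma Lmap_bounds:
  assumes n: "n \<in> {1..N}" and s: "s \<in> Ival x N"
  shows "x (n - 1) \<le> Lmap x N n s" "Lmap x N n s \<le> x n"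
proof -
  have "0 \<le> La x N n * (s - x 0)"
    using s La_pos[OF n] by (simp add: Ival_def)
  moreover have "La x N n * (s - x 0) \<le> La x N n * (x N - x 0)"
    using s La_pos[OF n] by (intro mult_left_mono) (auto simp: Ival_def)
  ultimately show "x (n - 1) \<le> Lmap x N n s" "Lmap x N n s \<le> x n"
    using La_length[OF n] by (simp_all add: Lmap_from_x0)
qed

lemma Lmap_in_Ival:
  assumes n: "n \<in> {1..N}" and s: "s \<in> Ival x N"
  shows "Lmap x N n s \<in> Ival x N"
proof -
  have "x 0 \<le> x (n - 1)" "x n \<le> x N"
    using n x_le[of 0 "n - 1"] x_le[of n N] by auto
  then show ?thesis
    using Lmap_bounds[OF n s] by (simp add: Ival_def)
qed

lemma Lmap_in_Isub:
  assumes n: "n \<in> {1..N}" and s: "s \<in> Ival x N" "s \<noteq> x 0"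
  shows "Lmap x N n s \<in> Isub x n"
proof -
  have "x (n - 1) < Lmap x N n s"
    using s La_pos[OF n] by (simp add: Ival_def Lmap_from_x0)
  then show ?thesis
    using Lmap_bounds[OF n s(1)] by (auto simp: Isub_def)
qed

lemma Linv_in_Ival:
  assumes n: "n \<in> {1..N}" and t: "t \<in> Isub x n"
  shows "Linv x N n t \<in> Ival x N"
proof -
  have t_bounds: "x (n - 1) \<le> t" "t \<le> x n"
    using t by (auto simp: Isub_def split: if_splits)
  have Linv_eq: "Linv x N n t = x 0 + (t - x (n - 1)) / La x N n"
    using Lmap_Linv[OF n, of t] La_pos[OF n] by (simp add: Lmap_from_x0 field_simps)
  have "(t - x (n - 1)) / La x N n \<le> (x n - x (n - 1)) / La x N n"
    using t_bounds La_pos[OF n] by (intro divide_right_mono) auto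
  also have "\<dots> = x N - x 0"
    using La_length[OF n] La_pos[OF n] by (simp add: field_simps)
  finally show ?thesis
    using Linv_eq t_bounds La_pos[OF n] by (simp add: Ival_def)
qed

lemma Ival_sets: "Ival x N \<in> sets lebesgue"
  by (simp add: Ival_def)

lemma La_nonzero: "n \<in> {1..N} \<Longrightarrow> La x N n \<noteq> 0"
  using La_pos[of n] by linarith

lemma Lmap_image: "n \<in> {1..N} \<Longrightarrow> Lmap x N n ` Ival x N \<subseteq> Ival x N"
  using Lmap_in_Ival by auto

lemma AE_Ival_neq_x0: "AE s in lebesgue_on (Ival x N). s \<noteq> x 0"
proof -
  have "AE s in lebesgue. s \<notin> {x 0}"
    by (intro AE_not_in) simp
  then show ?thesis
    using Ival_sets by (simp add: AE_restrict_space_iff eventually_mono)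
qed

lemma AE_Lmap_compose:
  assumes n: "n \<in> {1..N}" and P: "AE t in lebesgue_on (Ival x N). P t"
  shows "AE s in lebesgue_on (Ival x N). P (Lmap x N n s)"
  using AE_lebesgue_on_affine_compose[OF La_nonzero[OF n] Ival_sets Lmap_image[OF n, unfolded Lmap_affine] P]
  by (simp add: Lmap_affine)

lemma AE_Linv_compose:
  assumes n: "n \<in> {1..N}" and P: "AE s in lebesgue_on (Ival x N). P s"
  shows "AE t in lebesgue_on (Ival x N). t \<in> Isub x n \<longrightarrow> P (Linv x N n t)"
proof -
  have "1 / La x N n \<noteq> 0"
    using La_nonzero[OF n] by simp
  from AE_lebesgue_on_affine_pullback[OF this Ival_sets P, of "- Lb x N n / La x N n"]
  have "AE t in lebesgue_on (Ival x N). Linv x N n t \<in> Ival x N \<longrightarrow> P (Linv x N n t)"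
    by (simp add: Linv_affine)
  then show ?thesis
    by eventually_elim (use Linv_in_Ival[OF n] in blast)
qed

lemma measurable_Lmap_compose:
  assumes n: "n \<in> {1..N}" and f: "f \<in> lebesgue_on (Ival x N) \<rightarrow>\<^sub>M M"
  shows "(\<lambda>s. f (Lmap x N n s)) \<in> lebesgue_on (Ival x N) \<rightarrow>\<^sub>M M"
  using measurable_lebesgue_on_affine_compose[OF La_nonzero[OF n] Lmap_image[OF n, unfolded Lmap_affine] f]
  by (simp add: Lmap_affine)

lemma Lp_space_Lmap_compose:
  "n \<in> {1..N} \<Longrightarrow> f \<in> Lp_space p (Ival x N) \<Longrightarrow> (\<lambda>s. f (Lmap x N n s)) \<in> Lp_space p (Ival x N)"
  using Lp_space_affine_compose[OF La_nonzero Ival_sets, of n "Lb x N n"]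
    Lmap_image[unfolded Lmap_affine] by (simp add: Lmap_affine)

lemma Lp_conv_Lmap_compose:
  assumes "n \<in> {1..N}"
    and "\<And>k. F k \<in> borel_measurable (lebesgue_on (Ival x N))" "f \<in> borel_measurable (lebesgue_on (Ival x N))"
    and "Lp_conv p (Ival x N) F f"
  shows "Lp_conv p (Ival x N) (\<lambda>k s. F k (Lmap x N n s)) (\<lambda>s. f (Lmap x N n s))"
  using Lp_conv_affine_compose[OF La_nonzero Ival_sets Lmap_image[unfolded Lmap_affine]] assms
  by (simp add: Lmap_affine)

lemma is_fractal_iff:
  "is_fractal p x N \<alpha> f b g \<longleftrightarrow> g \<in> Lp_space p (Ival x N) \<and>
    (\<forall>n\<in>{1..N}. AE s in lebesgue_on (Ival x N).
       g (Lmap x N n s) = f (Lmap x N n s) + \<alpha> n s * (g s - b s))"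
proof -
  have "(AE t in lebesgue_on (Ival x N). t \<in> Isub x n \<longrightarrow>
          g t = f t + \<alpha> n (Linv x N n t) * (g (Linv x N n t) - b (Linv x N n t)))
    \<longleftrightarrow> (AE s in lebesgue_on (Ival x N). g (Lmap x N n s) = f (Lmap x N n s) + \<alpha> n s * (g s - b s))"
    if n: "n \<in> {1..N}" for n
  proof
    assume "AE t in lebesgue_on (Ival x N). t \<in> Isub x n \<longrightarrow>
        g t = f t + \<alpha> n (Linv x N n t) * (g (Linv x N n t) - b (Linv x N n t))"
    from AE_Lmap_compose[OF n this] AE_Ival_neq_x0 AE_space
    show "AE s in lebesgue_on (Ival x N). g (Lmap x N n s) = f (Lmap x N n s) + \<alpha> n s * (g s - b s)"
      by eventually_elim (simp add: Lmap_in_Isub[OF n] Linv_Lmap[OF n])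
  next
    assume "AE s in lebesgue_on (Ival x N). g (Lmap x N n s) = f (Lmap x N n s) + \<alpha> n s * (g s - b s)"
    from AE_Linv_compose[OF n this]
    show "AE t in lebesgue_on (Ival x N). t \<in> Isub x n \<longrightarrow>
        g t = f t + \<alpha> n (Linv x N n t) * (g (Linv x N n t) - b (Linv x N n t))"
      by eventually_elim (simp add: Lmap_Linv[OF n])
  qed
  then show ?thesis
    unfolding is_fractal_def by auto
qed

lemma fractal_zero_ratio:
  assumes fractal: "is_fractal p x N \<alpha> (\<lambda>_. 0) b g" and n: "n \<in> {1..N}" and m: "m \<in> {1..N}"
    and same_abs: "\<And>s. s \<in> Ival x N \<Longrightarrow> \<bar>\<alpha> n s\<bar> = \<bar>\<alpha> m s\<bar>"
  shows "AE s in lebesgue_on (Ival x N). g (Lmap x N n s) = \<alpha> n s / \<alpha> m s * g (Lmap x N m s)"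
proof -
  have "AE s in lebesgue_on (Ival x N). g (Lmap x N n s) = \<alpha> n s * (g s - b s)"
       "AE s in lebesgue_on (Ival x N). g (Lmap x N m s) = \<alpha> m s * (g s - b s)"
    using fractal n m by (simp_all add: is_fractal_iff)
  moreover have "AE s in lebesgue_on (Ival x N). s \<in> Ival x N"
    using AE_space[of "lebesgue_on (Ival x N)"] by simp
  ultimately show ?thesis
  proof eventually_elim
    case (elim s)
    show ?case
    proof (cases "\<alpha> m s = 0")
      case True
      then show ?thesis
        using elim same_abs[OF elim(3)] by simp
    next
      case False
      then show ?thesis
        using elim by simp
    qed
  qed
qed

lemma ratio_relation_limit:
  assumes p: "0 < p" and n: "n \<in> {1..N}" and m: "m \<in> {1..N}"
    and c: "c \<in> borel_measurable (lebesgue_on (Ival x N))" "0 \<le> C" "\<And>s. s \<in> Ival x N \<Longrightarrow> \<bar>c s\<bar> \<le> C"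
    and G: "\<And>k. G k \<in> borel_measurable (lebesgue_on (Ival x N))"
    and g: "g \<in> borel_measurable (lebesgue_on (Ival x N))"
    and conv: "Lp_conv p (Ival x N) G g"
    and relation: "\<And>k. AE s in lebesgue_on (Ival x N). G k (Lmap x N n s) = c s * G k (Lmap x N m s)"
  shows "AE s in lebesgue_on (Ival x N). g (Lmap x N n s) = c s * g (Lmap x N m s)"
proof -
  have conv_diff: "Lp_conv p (Ival x N) (\<lambda>k s. G k (Lmap x N n s) - c s * G k (Lmap x N m s))
      (\<lambda>s. g (Lmap x N n s) - c s * g (Lmap x N m s))"
  proof (rule Lp_conv_diff_scaled[OF p c(2,3)])
    show "Lp_conv p (Ival x N) (\<lambda>k s. G k (Lmap x N n s)) (\<lambda>s. g (Lmap x N n s))"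
         "Lp_conv p (Ival x N) (\<lambda>k s. G k (Lmap x N m s)) (\<lambda>s. g (Lmap x N m s))"
      using Lp_conv_Lmap_compose[OF n G g conv] Lp_conv_Lmap_compose[OF m G g conv] .
  qed (simp_all add: measurable_Lmap_compose[OF n G] measurable_Lmap_compose[OF m G]
      measurable_Lmap_compose[OF n g] measurable_Lmap_compose[OF m g])
  have meas_diff: "(\<lambda>s. g (Lmap x N n s) - c s * g (Lmap x N m s)) \<in> borel_measurable (lebesgue_on (Ival x N))"
    by (intro borel_measurable_diff borel_measurable_times c(1)
        measurable_Lmap_compose[OF n g] measurable_Lmap_compose[OF m g])
  have zero_diff: "AE s in lebesgue_on (Ival x N). G k (Lmap x N n s) - c s * G k (Lmap x N m s) = 0" for k
    using relation[of k] by eventually_elim simp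
  from Lp_conv_AE_zero_limit[OF meas_diff zero_diff conv_diff] show ?thesis
    by eventually_elim simp
qed

lemma fractal_zero_limit_ratio:
  assumes p: "0 < p" and n: "n \<in> {1..N}" and m: "m \<in> {1..N}"
    and \<alpha>: "\<And>n. n \<in> {1..N} \<Longrightarrow> \<alpha> n \<in> borel_measurable (lebesgue_on (Ival x N))"
    and same_abs: "\<And>s. s \<in> Ival x N \<Longrightarrow> \<bar>\<alpha> n s\<bar> = \<bar>\<alpha> m s\<bar>"
    and fractal: "\<And>k. is_fractal p x N \<alpha> (\<lambda>_. 0) (B k) (G k)"
    and g: "g \<in> borel_measurable (lebesgue_on (Ival x N))" and conv: "Lp_conv p (Ival x N) G g"
  shows "AE s in lebesgue_on (Ival x N). g (Lmap x N n s) = \<alpha> n s / \<alpha> m s * g (Lmap x N m s)"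
proof (rule ratio_relation_limit[OF p n m _ zero_le_one _ _ g conv])
  show "(\<lambda>s. \<alpha> n s / \<alpha> m s) \<in> borel_measurable (lebesgue_on (Ival x N))"
    using \<alpha>[OF n] \<alpha>[OF m] by (rule borel_measurable_divide)
  show "\<bar>\<alpha> n s / \<alpha> m s\<bar> \<le> 1" if "s \<in> Ival x N" for s
    using same_abs[OF that] by (simp add: abs_divide)
  show "G k \<in> borel_measurable (lebesgue_on (Ival x N))" for k
    using fractal[of k] Lp_space_measurable unfolding is_fractal_def by blast
  show "AE s in lebesgue_on (Ival x N). G k (Lmap x N n s) = \<alpha> n s / \<alpha> m s * G k (Lmap x N m s)" for k
    using fractal n m same_abs by (rule fractal_zero_ratio)
qed

text \<open>Division by zero yields zero in HOL, so \<open>\<alpha>\<^sub>m\<close> may vanish: then \<open>b = g\<close>, and the relation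
  forces \<open>g \<circ> L\<^sub>n = 0\<close>.\<close>

lemma fractal_zero_of_ratio:
  assumes p: "0 < p" and m: "m \<in> {1..N}" and g: "g \<in> Lp_space p (Ival x N)"
    and \<alpha>: "\<alpha> m \<in> borel_measurable (lebesgue_on (Ival x N))"
    and bounded: "0 \<le> C" "\<And>s. s \<in> Ival x N \<Longrightarrow> \<bar>1 / \<alpha> m s\<bar> \<le> C"
    and ratio: "\<And>n. n \<in> {1..N} \<Longrightarrow>
      AE s in lebesgue_on (Ival x N). g (Lmap x N n s) = \<alpha> n s / \<alpha> m s * g (Lmap x N m s)"
  shows "\<exists>b \<in> Lp_space p (Ival x N). is_fractal p x N \<alpha> (\<lambda>_. 0) b g"
proof
  let ?b = "\<lambda>s. g s - 1 / \<alpha> m s * g (Lmap x N m s)"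
  show "?b \<in> Lp_space p (Ival x N)"
  proof (rule Lp_space_diff_scaled[OF p g Lp_space_Lmap_compose[OF m g] _ bounded])
    show "(\<lambda>s. 1 / \<alpha> m s) \<in> borel_measurable (lebesgue_on (Ival x N))"
      using \<alpha> by measurable
  qed
  show "is_fractal p x N \<alpha> (\<lambda>_. 0) ?b g"
    using g ratio by (simp add: is_fractal_iff)
qed

end

theorem proposition6p3:
  fixes p :: ennreal and x :: "nat \<Rightarrow> real" and N :: nat
    and \<alpha> :: "nat \<Rightarrow> real \<Rightarrow> real" and \<Lambda> :: real
  assumes N2: "N \<ge> 2"
    and xinc: "\<And>i. i < N \<Longrightarrow> x i < x (Suc i)"
    and p_pos: "0 < p"
    and Lam: "0 \<le> \<Lambda>" "\<Lambda> < 1"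
    and alpha_meas: "\<And>n. n \<in> {1..N} \<Longrightarrow> \<alpha> n \<in> borel_measurable (lebesgue_on (Ival x N))"
    and alpha_vals: "\<And>n t. n \<in> {1..N} \<Longrightarrow> t \<in> Ival x N \<Longrightarrow> \<alpha> n t \<in> {\<Lambda>, -\<Lambda>}"
  shows "\<forall>B G g. (\<forall>k. B k \<in> Lp_space p (Ival x N))
            \<longrightarrow> (\<forall>k. is_fractal p x N \<alpha> (\<lambda>_. 0) (B k) (G k))
            \<longrightarrow> g \<in> Lp_space p (Ival x N)
            \<longrightarrow> Lp_conv p (Ival x N) G g
            \<longrightarrow> (\<exists>b \<in> Lp_space p (Ival x N). is_fractal p x N \<alpha> (\<lambda>_. 0) b g)"
proof (intro allI impI)
  fix B G g
  assume "\<forall>k. B k \<in> Lp_space p (Ival x N)"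
    and G: "\<forall>k. is_fractal p x N \<alpha> (\<lambda>_. 0) (B k) (G k)"
    and g: "g \<in> Lp_space p (Ival x N)"
    and conv: "Lp_conv p (Ival x N) G g"
  interpret increasing_partition x N
    using xinc by unfold_locales
  have one: "1 \<in> {1..N}"
    using N2 by simp
  have abs_alpha: "\<bar>\<alpha> n s\<bar> = \<Lambda>" if "n \<in> {1..N}" "s \<in> Ival x N" for n s
    using alpha_vals[OF that] Lam(1) by auto
  have ratio: "AE s in lebesgue_on (Ival x N). g (Lmap x N n s) = \<alpha> n s / \<alpha> 1 s * g (Lmap x N 1 s)"
    if n: "n \<in> {1..N}" for n
    using fractal_zero_limit_ratio[where \<alpha>=\<alpha> and B=B and G=G,
        OF p_pos n one alpha_meas _ _ Lp_space_measurable[OF g] conv]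
      abs_alpha[OF n] abs_alpha[OF one] G by simp
  have "0 \<le> 1 / \<Lambda>"
    using Lam(1) by simp
  moreover have "\<bar>1 / \<alpha> 1 s\<bar> \<le> 1 / \<Lambda>" if "s \<in> Ival x N" for s
    using abs_alpha[OF one that] by (simp add: abs_divide)
  ultimately show "\<exists>b \<in> Lp_space p (Ival x N). is_fractal p x N \<alpha> (\<lambda>_. 0) b g"
    by (rule fractal_zero_of_ratio[where \<alpha>=\<alpha>, OF p_pos one g alpha_meas[OF one] _ _ ratio])
qed

end
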